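(* Let $n \ge 2$, let $A$ be an $n \times n$ real matrix with $\mathrm{Tr}(AA^t) = n$, let $O$ be distributed according to Haar measure on $O(n,\mathbb{R})$, and let $W = \mathrm{Tr}(AO)$. Let $f:\mathbb{R}\to\mathbb{R}$ be a twice differentiable function with bounded second derivative. Then \[ \mathbb{E}[f'(W) - Wf(W)] = \mathbb{E}\left[ \frac{p_2(AO) - 1}{n-1} f'(W) \right], \] where $p_2(AO) = \mathrm{Tr}((AO)^2)$. *)

theory Defs
  imports "HOL-Probability.Probability"
begin

text \<open>Haar (probability) measure on the orthogonal group O(n), viewed as a Borel
probability measure on the space of n x n real matrices that is concentrated on
the orthogonal matrices and invariant under left multiplication by any
orthogonal matrix (this characterizes the normalized Haar measure uniquely).\<close>

definition haar_orthogonal :: "(real^'n^'n) measure \<Rightarrow> bool" where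
  "haar_orthogonal M \<longleftrightarrow>
     prob_space M \<and> sets M = sets borel \<and>
     (AE U in M. orthogonal_matrix U) \<and>
     (\<forall>Q::real^'n^'n. orthogonal_matrix Q \<longrightarrow> distr M borel (\<lambda>U. Q ** U) = M)"

end

theory Submission
  imports Defs
begin

(* For a skew-symmetric K with K ** K ** K = -K, the matrices
   R_t = I + sin t K + (1 - cos t) K^2 form a one-parameter group of rotations. By Haar invariance
   E[G(R_t U)] does not depend on t; differentiating at t = 0 (dominated convergence, all integrands
   being continuous on the compact group O(n)) gives, for G(U) = f(tr AU) tr(AKU),
     E[f'(W) tr(AKU)^2 + f(W) tr(A K^2 U)] = 0.
   Summing over K = E_ij - E_ji for all i \<noteq> j, the squares add up to 2 (tr(AA^t) - p_2(AU)) and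
   the second traces to -2(n - 1) W, which rearranges into the identity. *)

lemma matrix_add_rdistrib: "(A + B) ** C = A ** C + B ** (C :: 'a::semiring_1^'n^'m)"
  by (simp add: matrix_matrix_mult_def vec_eq_iff sum.distrib[symmetric] distrib_right)

lemma matrix_diff_ldistrib: "A ** (B - C) = A ** B - A ** (C :: 'a::ring_1^'n^'m)"
  by (simp add: matrix_matrix_mult_def vec_eq_iff sum_subtractf[symmetric] right_diff_distrib)

lemma matrix_diff_rdistrib: "(A - B) ** C = A ** C - B ** (C :: 'a::ring_1^'n^'m)"
  by (simp add: matrix_matrix_mult_def vec_eq_iff sum_subtractf[symmetric] left_diff_distrib)

lemma matrix_neg_left: "(- A) ** B = - (A ** (B :: 'a::ring_1^'n^'m))"
  by (simp add: matrix_matrix_mult_def vec_eq_iff sum_negf[symmetric])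

lemma matrix_neg_right: "A ** (- B) = - (A ** (B :: 'a::ring_1^'n^'m))"
  by (simp add: matrix_matrix_mult_def vec_eq_iff sum_negf[symmetric])

lemma transpose_add: "transpose (A + B) = transpose A + transpose B"
  by (simp add: transpose_def vec_eq_iff)

lemma transpose_diff: "transpose (A - B) = transpose A - transpose B"
  by (simp add: transpose_def vec_eq_iff)

lemma trace_scaleR: "trace (c *\<^sub>R A) = c * trace (A :: real^'n^'n)"
  by (simp add: trace_def sum_distrib_left)

lemma trace_neg: "trace (- A) = - trace (A :: 'a::comm_ring_1^'n^'n)"
  by (simp add: trace_def sum_negf)

lemma continuous_on_matrix_mult [continuous_intros]:
  fixes g :: "'a::topological_space \<Rightarrow> real^'n^'m" and h :: "'a \<Rightarrow> real^'p^'n"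
  assumes "continuous_on S g" "continuous_on S h"
  shows "continuous_on S (\<lambda>x. g x ** h x)"
  unfolding matrix_matrix_mult_def using assms by (intro continuous_intros)

lemma continuous_on_trace [continuous_intros]:
  fixes g :: "'a::topological_space \<Rightarrow> real^'n^'n"
  assumes "continuous_on S g"
  shows "continuous_on S (\<lambda>x. trace (g x))"
  unfolding trace_def using assms by (intro continuous_intros)

definition matrix_unit :: "'m \<Rightarrow> 'n \<Rightarrow> 'a::zero_neq_one^'n^'m" where
  "matrix_unit i j = (\<chi> a b. if a = i \<and> b = j then 1 else 0)"

lemma matrix_unit_mult:
  "(matrix_unit i j :: 'a::semiring_1^'n^'m) ** (matrix_unit k l :: 'a^'p^'n) =
     (if j = k then matrix_unit i l else 0)"
proof -
  have "(\<Sum>c\<in>UNIV. (if a = i \<and> c = j then 1 else 0) * (if c = k \<and> b = l then 1 else (0::'a)))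
      = (\<Sum>c\<in>UNIV. if c = j then (if j = k \<and> a = i \<and> b = l then 1 else 0) else 0)" for a b
    by (rule sum.cong) auto
  then show ?thesis
    by (simp add: matrix_unit_def matrix_matrix_mult_def vec_eq_iff)
qed

lemma trace_mult_matrix_unit: "trace (X ** matrix_unit i j) = (X $ j $ i :: 'a::semiring_1)"
proof -
  have "(\<Sum>c\<in>UNIV. X $ a $ c * (if c = i \<and> a = j then 1 else 0))
      = (\<Sum>c\<in>UNIV. if c = i then (if a = j then X $ a $ i else 0) else 0)" for a
    by (rule sum.cong) auto
  then show ?thesis
    by (simp add: matrix_unit_def matrix_matrix_mult_def trace_def)
qed

lemma transpose_matrix_unit: "transpose (matrix_unit i j) = matrix_unit j i"
  by (simp add: matrix_unit_def transpose_def vec_eq_iff)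

definition skew_unit :: "'n \<Rightarrow> 'n \<Rightarrow> 'a::ring_1^'n^'n" where
  "skew_unit i j = matrix_unit i j - matrix_unit j i"

lemma transpose_skew_unit: "transpose (skew_unit i j) = - skew_unit i j"
  by (simp add: skew_unit_def transpose_diff transpose_matrix_unit)

lemma skew_unit_square:
  assumes "i \<noteq> j"
  shows "skew_unit i j ** skew_unit i j = - matrix_unit i i - (matrix_unit j j :: 'a::ring_1^'n^'n)"
  using assms by (simp add: skew_unit_def matrix_diff_ldistrib matrix_diff_rdistrib matrix_unit_mult)

lemma skew_unit_cube:
  "(skew_unit i j ** skew_unit i j) ** skew_unit i j = - (skew_unit i j :: 'a::ring_1^'n^'n)"
proof (cases "i = j")
  case True
  then show ?thesis by (simp add: skew_unit_def)
next
  case False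
  then show ?thesis
    by (simp add: skew_unit_square) (simp add: skew_unit_def matrix_diff_ldistrib
        matrix_diff_rdistrib matrix_neg_left matrix_unit_mult)
qed

lemma trace_skew_unit:
  fixes A U :: "'a::comm_ring_1^'n^'n"
  shows "trace (A ** skew_unit i j ** U) = (U ** A) $ j $ i - (U ** A) $ i $ j"
proof -
  have "trace (A ** skew_unit i j ** U) = trace ((U ** A) ** skew_unit i j)"
    by (simp add: trace_mul_sym[of _ U] matrix_mul_assoc)
  then show ?thesis
    by (simp add: skew_unit_def matrix_diff_ldistrib trace_sub trace_mult_matrix_unit)
qed

lemma trace_skew_unit_square:
  fixes A U :: "'a::comm_ring_1^'n^'n"
  assumes "i \<noteq> j"
  shows "trace (A ** (skew_unit i j ** skew_unit i j) ** U) = - (U ** A) $ i $ i - (U ** A) $ j $ j"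
proof -
  have "trace (A ** (skew_unit i j ** skew_unit i j) ** U)
      = trace ((U ** A) ** (skew_unit i j ** skew_unit i j))"
    by (simp add: trace_mul_sym[of _ U] matrix_mul_assoc)
  then show ?thesis
    using assms by (simp add: skew_unit_square matrix_diff_ldistrib matrix_neg_right trace_sub
        trace_neg trace_mult_matrix_unit)
qed

lemma sum_off_diagonal:
  "(\<Sum>j\<in>UNIV - {i}. g j) = (\<Sum>j\<in>(UNIV::'n::finite set). g j) - (g i :: 'a::ab_group_add)"
  by (simp add: sum.remove[of UNIV i])

lemma sum_trace_skew_unit_squared:
  fixes A U :: "real^'n^'n"
  assumes "orthogonal_matrix U"
  shows "(\<Sum>i\<in>UNIV. \<Sum>j\<in>UNIV - {i}. (trace (A ** skew_unit i j ** U))\<^sup>2)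
       = 2 * (trace (A ** transpose A) - trace ((A ** U) ** (A ** U)))"
proof -
  define B where "B = U ** A"
  have "(\<Sum>i\<in>UNIV. \<Sum>j\<in>UNIV - {i}. (trace (A ** skew_unit i j ** U))\<^sup>2)
      = (\<Sum>i\<in>UNIV. \<Sum>j\<in>UNIV. (B $ j $ i - B $ i $ j)\<^sup>2)"
    by (simp add: trace_skew_unit sum_off_diagonal B_def)
  also have "\<dots> = (\<Sum>i\<in>UNIV. \<Sum>j\<in>UNIV. (B $ j $ i)\<^sup>2) + (\<Sum>i\<in>UNIV. \<Sum>j\<in>UNIV. (B $ i $ j)\<^sup>2)
       - 2 * (\<Sum>i\<in>UNIV. \<Sum>j\<in>UNIV. B $ i $ j * B $ j $ i)"
    by (simp add: power2_diff sum.distrib sum_subtractf sum_distrib_left algebra_simps)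
  also have "(\<Sum>i\<in>UNIV. \<Sum>j\<in>UNIV. (B $ j $ i)\<^sup>2) = (\<Sum>i\<in>UNIV. \<Sum>j\<in>UNIV. (B $ i $ j)\<^sup>2)"
    by (rule sum.swap)
  also have "(\<Sum>i\<in>UNIV. \<Sum>j\<in>UNIV. (B $ i $ j)\<^sup>2) = trace (B ** transpose B)"
    by (simp add: trace_def matrix_matrix_mult_def transpose_def power2_eq_square)
  also have "(\<Sum>i\<in>UNIV. \<Sum>j\<in>UNIV. B $ i $ j * B $ j $ i) = trace (B ** B)"
    by (simp add: trace_def matrix_matrix_mult_def)
  also have "trace (B ** transpose B) = trace (A ** transpose A)"
  proof -
    have "trace (B ** transpose B) = trace (U ** ((A ** transpose A) ** transpose U))"
      unfolding B_def by (simp add: matrix_transpose_mul matrix_mul_assoc)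
    also have "\<dots> = trace (((A ** transpose A) ** transpose U) ** U)"
      by (rule trace_mul_sym)
    finally show ?thesis
      using assms by (simp add: orthogonal_matrix_def matrix_mul_assoc[symmetric])
  qed
  also have "trace (B ** B) = trace ((A ** U) ** (A ** U))"
    unfolding B_def using trace_mul_sym[of U "A ** U ** A"] by (simp add: matrix_mul_assoc)
  finally show ?thesis by simp
qed

lemma sum_trace_skew_unit_square:
  fixes A U :: "real^'n^'n"
  shows "(\<Sum>i\<in>UNIV. \<Sum>j\<in>UNIV - {i}. trace (A ** (skew_unit i j ** skew_unit i j) ** U))
       = - (2 * (real CARD('n) - 1) * trace (A ** U))"
proof -
  define B where "B = U ** A"
  have "(\<Sum>i\<in>UNIV. \<Sum>j\<in>UNIV - {i}. trace (A ** (skew_unit i j ** skew_unit i j) ** U))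
      = (\<Sum>i\<in>UNIV. \<Sum>j\<in>UNIV - {i}. - B $ i $ i - B $ j $ j)"
    by (intro sum.cong refl) (auto simp: trace_skew_unit_square B_def)
  also have "\<dots> = (\<Sum>i\<in>UNIV. - (real CARD('n) - 2) * B $ i $ i - trace B)"
    by (intro sum.cong refl) (simp add: sum_off_diagonal sum_subtractf trace_def algebra_simps)
  also have "\<dots> = - (2 * (real CARD('n) - 1) * trace B)"
    by (simp add: sum.distrib sum_subtractf sum_distrib_left[symmetric] trace_def algebra_simps)
  also have "trace B = trace (A ** U)"
    unfolding B_def by (rule trace_mul_sym)
  finally show ?thesis .
qed

definition matrix_poly2 :: "real^'n^'n \<Rightarrow> real \<Rightarrow> real \<Rightarrow> real \<Rightarrow> real^'n^'n" where
  "matrix_poly2 K a b c = a *\<^sub>R mat 1 + b *\<^sub>R K + c *\<^sub>R (K ** K)"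

(* Rodrigues' formula: when K ** K ** K = -K this is exp (t K). *)
definition rotation :: "real^'n^'n \<Rightarrow> real \<Rightarrow> real^'n^'n" where
  "rotation K t = mat 1 + sin t *\<^sub>R K + (1 - cos t) *\<^sub>R (K ** K)"

lemma rotation_zero [simp]: "rotation K 0 = mat 1"
  by (simp add: rotation_def)

lemma trace_rotation:
  "trace (X ** (rotation K t ** U)) =
     trace (X ** U) + sin t * trace (X ** K ** U) + (1 - cos t) * trace (X ** (K ** K) ** U)"
  by (simp add: rotation_def matrix_add_ldistrib matrix_add_rdistrib matrix_scalar_ac
      scalar_matrix_assoc[symmetric] matrix_mul_assoc trace_add trace_scaleR)

context
  fixes K :: "real^'n^'n"
  assumes cube: "(K ** K) ** K = - K"
begin

lemma matrix_poly2_mult_K: "matrix_poly2 K a b c ** K = matrix_poly2 K 0 (a - c) b"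
  unfolding matrix_poly2_def
  by (simp add: matrix_add_rdistrib scalar_matrix_assoc[symmetric] cube vec_eq_iff algebra_simps)

lemma matrix_poly2_mult:
  "matrix_poly2 K a b c ** matrix_poly2 K a' b' c' =
     matrix_poly2 K (a * a') (a * b' + b * a' - b * c' - c * b') (a * c' + c * a' + b * b' - c * c')"
proof -
  have "matrix_poly2 K a b c ** matrix_poly2 K a' b' c'
      = a' *\<^sub>R matrix_poly2 K a b c + b' *\<^sub>R (matrix_poly2 K a b c ** K)
        + c' *\<^sub>R ((matrix_poly2 K a b c ** K) ** K)"
    by (subst (2) matrix_poly2_def)
      (simp add: matrix_add_ldistrib matrix_scalar_ac scalar_matrix_assoc[symmetric] matrix_mul_assoc)
  then show ?thesis
    by (simp add: matrix_poly2_mult_K) (simp add: matrix_poly2_def vec_eq_iff algebra_simps)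
qed

lemma rotation_add: "rotation K s ** rotation K t = rotation K (s + t)"
proof -
  have "rotation K t = matrix_poly2 K 1 (sin t) (1 - cos t)" for t
    by (simp add: rotation_def matrix_poly2_def)
  then show ?thesis
    by (simp only: matrix_poly2_mult) (simp add: sin_add cos_add algebra_simps)
qed

lemma has_real_derivative_rotation:
  assumes "\<And>V. ((\<lambda>t. G (rotation K t ** V)) has_real_derivative D V) (at 0)"
  shows "((\<lambda>t. G (rotation K t ** U)) has_real_derivative D (rotation K s ** U)) (at s)"
  using assms[of "rotation K s ** U"]
  by (simp add: DERIV_shift[of _ _ 0 s, simplified] matrix_mul_assoc rotation_add)

lemma orthogonal_matrix_rotation:
  assumes skew: "transpose K = - K"
  shows "orthogonal_matrix (rotation K t)"
proof -
  have "transpose (K ** K) = K ** K"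
    by (simp add: matrix_transpose_mul skew matrix_neg_left matrix_neg_right)
  then have "transpose (rotation K t) = rotation K (- t)"
    by (simp add: rotation_def transpose_add transpose_scalar skew)
  then show ?thesis
    by (simp add: orthogonal_matrix rotation_add)
qed

end

lemma norm_orthogonal_matrix:
  fixes U :: "real^'n^'n"
  assumes "orthogonal_matrix U"
  shows "norm U = sqrt (real CARD('n))"
proof -
  have "norm (U $ i) = 1" for i
  proof -
    have "row i U = U $ i"
      by (simp add: row_def vec_eq_iff)
    then show ?thesis
      using assms orthogonal_matrix_orthonormal_rows by metis
  qed
  then show ?thesis
    by (simp add: norm_vec_def L2_set_def)
qed

lemma compact_orthogonal_matrices: "compact {U :: real^'n^'n. orthogonal_matrix U}"
  unfolding compact_eq_bounded_closed
proof
  show "bounded {U :: real^'n^'n. orthogonal_matrix U}"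
    by (rule boundedI[where B = "sqrt (real CARD('n))"]) (simp add: norm_orthogonal_matrix)
  have "continuous_on UNIV (\<lambda>U :: real^'n^'n. transpose U ** U)"
    unfolding transpose_def by (intro continuous_intros)
  then show "closed {U :: real^'n^'n. orthogonal_matrix U}"
    unfolding orthogonal_matrix by (rule closed_Collect_eq[OF _ continuous_on_const])
qed

lemma bounded_on_orthogonal_matrices:
  fixes g :: "real^'n^'n \<Rightarrow> real"
  assumes "continuous_on UNIV g"
  obtains B where "\<And>U. orthogonal_matrix U \<Longrightarrow> \<bar>g U\<bar> \<le> B"
proof -
  have "bounded (g ` {U. orthogonal_matrix U})"
    using assms by (intro compact_imp_bounded compact_continuous_image compact_orthogonal_matrices)
      (auto intro: continuous_on_subset)
  then obtain B where "\<forall>y \<in> g ` {U. orthogonal_matrix U}. norm y \<le> B"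
    unfolding bounded_iff by blast
  then show ?thesis
    by (auto intro!: that)
qed

lemma difference_quotient_tendsto:
  assumes "(g has_real_derivative d) (at 0)"
  shows "(\<lambda>k. (g (1 / Suc k) - g 0) / (1 / Suc k)) \<longlonglongrightarrow> d"
proof -
  have "((\<lambda>t. (g t - g 0) / (t - 0)) \<longlongrightarrow> d) (at 0)"
    using assms has_field_derivative_iff by blast
  moreover have "filterlim (\<lambda>k. 1 / real (Suc k)) (at 0) sequentially"
    unfolding filterlim_at using LIMSEQ_Suc[OF lim_const_over_n[of 1]]
    by (auto simp del: of_nat_Suc)
  ultimately show ?thesis
    using filterlim_compose by fastforce
qed

lemma abs_difference_quotient_le:
  assumes "\<And>s. (g has_real_derivative g' s) (at s)" and "\<And>s. \<bar>g' s\<bar> \<le> B" and "0 < t"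
  shows "\<bar>(g t - g 0) / t\<bar> \<le> B"
proof -
  obtain z where "g t - g 0 = (t - 0) * g' z"
    using MVT2[OF \<open>0 < t\<close> assms(1)] by blast
  then show ?thesis
    using assms(2,3) by (simp add: abs_mult)
qed

context
  fixes M :: "(real^'n^'n) measure"
  assumes haar: "haar_orthogonal M"
begin

lemma prob_space_haar: "prob_space M"
  using haar by (simp add: haar_orthogonal_def)

lemma AE_orthogonal_matrix_haar: "AE U in M. orthogonal_matrix U"
  using haar by (simp add: haar_orthogonal_def)

lemma borel_measurable_haar:
  fixes g :: "real^'n^'n \<Rightarrow> 'b::topological_space"
  assumes "continuous_on UNIV g"
  shows "g \<in> borel_measurable M"
proof -
  have "sets M = sets borel"
    using haar by (simp add: haar_orthogonal_def)
  then show ?thesis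
    using borel_measurable_continuous_onI[OF assms] measurable_cong_sets by blast
qed

lemma integrable_haar:
  fixes g :: "real^'n^'n \<Rightarrow> real"
  assumes "continuous_on UNIV g"
  shows "integrable M g"
proof -
  interpret prob_space M
    by (rule prob_space_haar)
  obtain B where B: "\<And>U. orthogonal_matrix U \<Longrightarrow> \<bar>g U\<bar> \<le> B"
    using bounded_on_orthogonal_matrices[OF assms] by blast
  have "AE U in M. norm (g U) \<le> B"
    using AE_orthogonal_matrix_haar by eventually_elim (simp add: B)
  then show ?thesis
    using borel_measurable_haar[OF assms] by (rule integrable_const_bound)
qed

lemma integral_haar_mult_left:
  fixes g :: "real^'n^'n \<Rightarrow> real"
  assumes Q: "orthogonal_matrix Q" and g: "continuous_on UNIV g"
  shows "(\<integral>U. g (Q ** U) \<partial>M) = integral\<^sup>L M g"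
proof -
  have "(\<lambda>U. Q ** U) \<in> measurable M borel"
    by (intro borel_measurable_haar continuous_intros)
  then have "(\<integral>U. g (Q ** U) \<partial>M) = integral\<^sup>L (distr M borel (\<lambda>U. Q ** U)) g"
    using g by (simp add: integral_distr borel_measurable_continuous_onI)
  also have "distr M borel (\<lambda>U. Q ** U) = M"
    using haar Q by (simp add: haar_orthogonal_def)
  finally show ?thesis .
qed

lemma integral_haar_rotation_derivative_eq_0:
  fixes K :: "real^'n^'n" and G D :: "real^'n^'n \<Rightarrow> real"
  assumes skew: "transpose K = - K" and cube: "(K ** K) ** K = - K"
    and G: "continuous_on UNIV G" and D: "continuous_on UNIV D"
    and deriv: "\<And>V. ((\<lambda>t. G (rotation K t ** V)) has_real_derivative D V) (at 0)"
  shows "integral\<^sup>L M D = 0"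
proof -
  interpret prob_space M
    by (rule prob_space_haar)
  define \<phi> where "\<phi> U t = G (rotation K t ** U)" for U t
  define q where "q k U = (\<phi> U (1 / Suc k) - \<phi> U 0) / (1 / Suc k)" for k U
  obtain B where B: "\<And>V. orthogonal_matrix V \<Longrightarrow> \<bar>D V\<bar> \<le> B"
    using bounded_on_orthogonal_matrices[OF D] by blast
  have \<phi>_deriv: "(\<phi> U has_real_derivative D (rotation K s ** U)) (at s)" for U s
    unfolding \<phi>_def by (rule has_real_derivative_rotation[OF cube deriv])
  have q_bound: "\<bar>q k U\<bar> \<le> B" if "orthogonal_matrix U" for k U
    unfolding q_def using orthogonal_matrix_mul[OF orthogonal_matrix_rotation[OF cube skew] that]
    by (intro abs_difference_quotient_le[OF \<phi>_deriv] B) auto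
  have \<phi>_cont: "continuous_on UNIV (\<lambda>U. \<phi> U t)" for t
    unfolding \<phi>_def using G by (intro continuous_on_compose2[OF G] continuous_intros) auto
  have q_integral: "integral\<^sup>L M (q k) = 0" for k
  proof -
    have "(\<integral>U. \<phi> U t \<partial>M) = integral\<^sup>L M G" for t
      unfolding \<phi>_def by (rule integral_haar_mult_left[OF orthogonal_matrix_rotation[OF cube skew] G])
    then show ?thesis
      unfolding q_def using integrable_haar[OF \<phi>_cont] by simp
  qed
  have "(\<lambda>k. integral\<^sup>L M (q k)) \<longlonglongrightarrow> integral\<^sup>L M D"
  proof (rule integral_dominated_convergence[where w = "\<lambda>_. B"])
    show "D \<in> borel_measurable M" "\<And>k. q k \<in> borel_measurable M"
      unfolding q_def using D \<phi>_cont by (auto intro!: borel_measurable_haar continuous_intros)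
    show "integrable M (\<lambda>_. B)"
      by simp
    show "AE U in M. (\<lambda>k. q k U) \<longlonglongrightarrow> D U"
    proof (rule AE_I2)
      fix U
      have "(\<lambda>k. q k U) \<longlonglongrightarrow> D (rotation K 0 ** U)"
        unfolding q_def by (rule difference_quotient_tendsto[OF \<phi>_deriv])
      then show "(\<lambda>k. q k U) \<longlonglongrightarrow> D U"
        by simp
    qed
    show "AE U in M. norm (q k U) \<le> B" for k
      using AE_orthogonal_matrix_haar by eventually_elim (simp add: q_bound)
  qed
  then show ?thesis
    by (simp add: q_integral LIMSEQ_const_iff)
qed

lemma integral_haar_stein_skew_eq_0:
  fixes K A :: "real^'n^'n" and f f' :: "real \<Rightarrow> real"
  assumes skew: "transpose K = - K" and cube: "(K ** K) ** K = - K"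
    and f: "\<And>x. (f has_real_derivative f' x) (at x)" and f': "continuous_on UNIV f'"
  shows "(\<integral>U. f' (trace (A ** U)) * (trace (A ** K ** U))\<^sup>2
              + f (trace (A ** U)) * trace (A ** (K ** K) ** U) \<partial>M) = 0"
proof (rule integral_haar_rotation_derivative_eq_0[OF skew cube,
      where G = "\<lambda>V. f (trace (A ** V)) * trace (A ** K ** V)"])
  have f_cont: "continuous_on UNIV f"
    using f by (meson DERIV_isCont continuous_at_imp_continuous_on)
  show "continuous_on UNIV (\<lambda>V. f (trace (A ** V)) * trace (A ** K ** V))"
    by (intro continuous_intros continuous_on_compose2[OF f_cont]) auto
  show "continuous_on UNIV (\<lambda>U. f' (trace (A ** U)) * (trace (A ** K ** U))\<^sup>2
              + f (trace (A ** U)) * trace (A ** (K ** K) ** U))"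
    by (intro continuous_intros continuous_on_compose2[OF f_cont] continuous_on_compose2[OF f'])
      auto
  fix V
  define w where "w = trace (A ** V)"
  define p where "p = trace (A ** K ** V)"
  define q where "q = trace (A ** (K ** K) ** V)"
  have "A ** K ** (K ** K) = - (A ** K)"
    by (metis cube matrix_mul_assoc matrix_neg_right)
  then have "f (trace (A ** (rotation K t ** V))) * trace (A ** K ** (rotation K t ** V))
      = f (w + sin t * p + (1 - cos t) * q) * (p + sin t * q - (1 - cos t) * p)" for t
    unfolding trace_rotation w_def p_def q_def
    by (simp add: matrix_mul_assoc matrix_neg_left trace_neg)
  moreover have "((\<lambda>t. f (w + sin t * p + (1 - cos t) * q) * (p + sin t * q - (1 - cos t) * p))
      has_real_derivative f' w * p\<^sup>2 + f w * q) (at 0)"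
    by (auto intro!: derivative_eq_intros DERIV_chain2[OF f] simp: power2_eq_square)
  ultimately show "((\<lambda>t. f (trace (A ** (rotation K t ** V))) * trace (A ** K ** (rotation K t ** V)))
      has_real_derivative f' (trace (A ** V)) * (trace (A ** K ** V))\<^sup>2
        + f (trace (A ** V)) * trace (A ** (K ** K) ** V)) (at 0)"
    by (simp add: w_def p_def q_def)
qed

lemma integral_haar_stein_identity:
  fixes A :: "real^'n^'n" and f f' :: "real \<Rightarrow> real"
  assumes f: "\<And>x. (f has_real_derivative f' x) (at x)" and f': "continuous_on UNIV f'"
  shows "(\<integral>U. f' (trace (A ** U)) * (trace (A ** transpose A) - trace ((A ** U) ** (A ** U)))
            - (real CARD('n) - 1) * trace (A ** U) * f (trace (A ** U)) \<partial>M) = 0"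
proof -
  have f_cont: "continuous_on UNIV f"
    using f by (meson DERIV_isCont continuous_at_imp_continuous_on)
  note continuous_compose = continuous_on_compose2[OF f_cont] continuous_on_compose2[OF f']
  define D where "D i j U = f' (trace (A ** U)) * (trace (A ** skew_unit i j ** U))\<^sup>2
      + f (trace (A ** U)) * trace (A ** (skew_unit i j ** skew_unit i j) ** U)" for i j U
  have D_integral: "integral\<^sup>L M (D i j) = 0" for i j
    unfolding D_def by (rule integral_haar_stein_skew_eq_0[OF transpose_skew_unit skew_unit_cube f f'])
  have D_cont: "continuous_on UNIV (D i j)" for i j
    unfolding D_def by (intro continuous_intros continuous_compose) auto
  note D_integrable = integrable_haar[OF D_cont]
  have "AE U in M. f' (trace (A ** U)) * (trace (A ** transpose A) - trace ((A ** U) ** (A ** U)))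
            - (real CARD('n) - 1) * trace (A ** U) * f (trace (A ** U))
      = (\<Sum>i\<in>UNIV. \<Sum>j\<in>UNIV - {i}. D i j U) / 2"
    using AE_orthogonal_matrix_haar
  proof eventually_elim
    case (elim U)
    then show ?case
      using sum_trace_skew_unit_squared[OF elim, of A] sum_trace_skew_unit_square[of A U]
      by (simp add: D_def sum.distrib sum_distrib_left[symmetric]) (simp add: algebra_simps)
  qed
  then have "(\<integral>U. f' (trace (A ** U)) * (trace (A ** transpose A) - trace ((A ** U) ** (A ** U)))
            - (real CARD('n) - 1) * trace (A ** U) * f (trace (A ** U)) \<partial>M)
      = (\<integral>U. (\<Sum>i\<in>UNIV. \<Sum>j\<in>UNIV - {i}. D i j U) / 2 \<partial>M)"
    by (intro integral_cong_AE borel_measurable_haar continuous_intros continuous_compose D_cont) auto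
  also have "\<dots> = 0"
    using D_integrable D_integral by (simp add: integral_sum)
  finally show ?thesis .
qed

end

theorem mainTheorem4:
  fixes A :: "real^'n^'n" and M :: "(real^'n^'n) measure"
    and f f' f'' :: "real \<Rightarrow> real"
  assumes n2: "CARD('n) \<ge> 2"
    and trA: "trace (A ** transpose A) = real CARD('n)"
    and haar: "haar_orthogonal M"
    and df: "\<And>x. (f has_real_derivative f' x) (at x)"
    and df': "\<And>x. (f' has_real_derivative f'' x) (at x)"
    and bdd: "\<exists>B. \<forall>x. \<bar>f'' x\<bar> \<le> B"
  shows "(\<integral>U. (f' (trace (A ** U)) - trace (A ** U) * f (trace (A ** U))) \<partial>M)
       = (\<integral>U. ((trace ((A ** U) ** (A ** U)) - 1) / (real CARD('n) - 1))
                 * f' (trace (A ** U)) \<partial>M)"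
proof -
  have n_minus_1: "real CARD('n) - 1 \<noteq> 0"
    using n2 by simp
  have f'_cont: "continuous_on UNIV f'"
    using df' by (meson DERIV_isCont continuous_at_imp_continuous_on)
  have f_cont: "continuous_on UNIV f"
    using df by (meson DERIV_isCont continuous_at_imp_continuous_on)
  note continuous_compose = continuous_on_compose2[OF f_cont] continuous_on_compose2[OF f'_cont]
  define L where "L U = f' (trace (A ** U)) - trace (A ** U) * f (trace (A ** U))" for U
  define R where "R U = ((trace ((A ** U) ** (A ** U)) - 1) / (real CARD('n) - 1))
    * f' (trace (A ** U))" for U
  have L_integrable: "integrable M L" and R_integrable: "integrable M R"
    unfolding L_def R_def using n_minus_1
    by (intro integrable_haar[OF haar] continuous_intros continuous_compose; simp)+
  have "L U - R U = (f' (trace (A ** U)) * (trace (A ** transpose A) - trace ((A ** U) ** (A ** U)))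
      - (real CARD('n) - 1) * trace (A ** U) * f (trace (A ** U))) / (real CARD('n) - 1)" for U
    unfolding L_def R_def trA using n_minus_1 by (simp add: field_simps)
  then have "(\<integral>U. L U - R U \<partial>M) = 0"
    using integral_haar_stein_identity[OF haar df f'_cont, of A] by simp
  then have "integral\<^sup>L M L = integral\<^sup>L M R"
    using L_integrable R_integrable by simp
  then show ?thesis
    unfolding L_def R_def .
qed

end
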